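(* Let $\boldsymbol X=A\times_{\max}\boldsymbol Z$ be a recursive max-linear model on a DAG $\mathcal D=(V,E)$ satisfying Assumptions A, fix any $a>1$, and let $O\subseteq V$ satisfy $\mathrm{An}(O)\cap(V\setminus O)=\emptyset$. For $j\in V\setminus O$, we have $\mathrm{an}(j)\cap(V\setminus O)=\emptyset$ if and only if $$\sigma^2_{M_{i,aj,aO}}-\sigma^2_{M_{i,j,O}}=(a^2-1)\sigma^2_{M_{j,O}}\quad\text{for all } i\in V\setminus(O\cup\{j\}).\qquad(\ast)$$ If $j\in V\setminus O$ has an ancestor in $V\setminus O$, then $\sigma^2_{M_{i,aj,aO}}-\sigma^2_{M_{i,j,O}}\le(a^2-1)\sigma^2_{M_{j,O}}$ for all $i\in V\setminus(O\cup\{j\})$, with strict inequality whenever $i\in (V\setminus O)\cap\mathrm{an}(j)$. Finally, if two distinct nodes $j_1,j_2\in V\setminus O$ both satisfy $(\ast)$, then $j_1\notin\mathrm{an}(j_2)$ and $j_2\notin\mathrm{an}(j_1)$.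
   Context: Let $\mathcal D=(V,E)$ be a directed acyclic graph with $V=\{1,\dots,d\}$; $\mathrm{pa}(i)$, $\mathrm{an}(i)$, $\mathrm{de}(i)$ denote parents, ancestors (nodes with a directed path to $i$) and descendants of $i$, $\mathrm{An}(i)=\mathrm{an}(i)\cup\{i\}$, $\mathrm{An}(U)=\bigcup_{u\in U}\mathrm{An}(u)$; $\vee$ denotes maximum. A recursive max-linear model (RMLM) on $\mathcal D$ is the unique solution of $X_i=\bigvee_{k\in\mathrm{pa}(i)}c_{ik}X_k\vee c_{ii}Z_i$, $i\in V$, with edge weights $c_{ik}>0$ ($k\in \mathrm{pa}(i)$), $c_{ii}>0$; it equals $X_i=(A\times_{\max}\boldsymbol Z)_i=\bigvee_{j\in V}a_{ij}Z_j$ where $a_{ii}=c_{ii}$, $a_{ij}$ for $j\in\mathrm{an}(i)$ is the maximum over all directed paths $j=\ell_0\to\ell_1\to\dots\to\ell_m=i$ of $c_{jj}c_{\ell_1\ell_0}\cdots c_{\ell_m\ell_{m-1}}$, and $a_{ij}=0$ for $j\notin\mathrm{An}(i)$. Assumptions A: (A1) $Z_1,\dots,Z_d$ are independent, nonnegative, atom-free, with $n\,\mathbb P(n^{-1/2}Z_i>z)\to z^{-2}$ as $n\to\infty$ for all $z>0$; (A2) the norm is the Euclidean norm $\|\cdot\|$; (A3) $A$ is standardised, i.e. each row is divided by its Euclidean norm so that $\sum_{j\in V}a_{ij}^2=1$ for all $i$ (the model is taken as $\boldsymbol X=A\times_{\max}\boldsymbol Z$ with this standardised $A$). Under these assumptions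 it is known that $a_{ij}>0$ iff $j\in\mathrm{An}(i)$, and $a_{jj}>a_{ij}$ for all $i\neq j$. Angular measure: with columns $\boldsymbol a_k$ of $A$, $\boldsymbol X$ has angular measure $H_{\boldsymbol X}=\sum_{k\in V}\|\boldsymbol a_k\|^2\delta_{\boldsymbol a_k/\|\boldsymbol a_k\|}$ on $\Theta^{d-1}_+=\{\boldsymbol\omega\in[0,\infty)^d:\|\boldsymbol\omega\|=1\}$. For weights $b_1,\dots,b_d\ge0$, the squared scaling of the max-projection $Y=\bigvee_k b_kX_k$ is $\sigma_Y^2=\int_{\Theta^{d-1}_+}\bigvee_k b_k^2\omega_k^2\,dH_{\boldsymbol X}(\boldsymbol\omega)$. Notation: for $a\ge1$, $O\subseteq V$, $i,j\notin O$: $M_{i,aj,aO}=X_i\vee aX_j\vee\bigvee_{k\in O}aX_k$, $M_{i,j,O}=X_i\vee X_j\vee\bigvee_{k\in O}X_k$, $M_{j,O}=X_j\vee\bigvee_{k\in O}X_k$. *)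

theory Defs
  imports Main "HOL-Analysis.Analysis"
begin

text \<open>DAG on a finite node type 'v (V = UNIV). An edge (k, i) \<in> E means k \<rightarrow> i,
  i.e. k is a parent of i.\<close>

definition pa :: "('v \<times> 'v) set \<Rightarrow> 'v \<Rightarrow> 'v set" where
  "pa E i = {k. (k, i) \<in> E}"

definition an :: "('v \<times> 'v) set \<Rightarrow> 'v \<Rightarrow> 'v set" where
  "an E i = {j. (j, i) \<in> E\<^sup>+}"

definition An :: "('v \<times> 'v) set \<Rightarrow> 'v set \<Rightarrow> 'v set" where
  "An E U = (\<Union>u\<in>U. an E u \<union> {u})"

definition dpath :: "('v \<times> 'v) set \<Rightarrow> 'v list \<Rightarrow> 'v \<Rightarrow> 'v \<Rightarrow> bool" where
  "dpath E p j i \<longleftrightarrow> p \<noteq> [] \<and> hd p = j \<and> last p = i \<and>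
     (\<forall>t < length p - 1. (p ! t, p ! Suc t) \<in> E)"

definition path_weight :: "('v \<Rightarrow> 'v \<Rightarrow> real) \<Rightarrow> 'v list \<Rightarrow> real" where
  "path_weight c p = c (hd p) (hd p) * (\<Prod>t < length p - 1. c (p ! Suc t) (p ! t))"

definition ml_coeff :: "('v \<times> 'v) set \<Rightarrow> ('v \<Rightarrow> 'v \<Rightarrow> real) \<Rightarrow> 'v \<Rightarrow> 'v \<Rightarrow> real" where
  "ml_coeff E c i j =
     (if i = j then c i i
      else if j \<in> an E i then Sup {path_weight c p | p. dpath E p j i \<and> length p \<ge> 2}
      else 0)"

definition std_coeff :: "('v::finite \<times> 'v) set \<Rightarrow> ('v \<Rightarrow> 'v \<Rightarrow> real) \<Rightarrow> 'v \<Rightarrow> 'v \<Rightarrow> real" where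
  "std_coeff E c i j = ml_coeff E c i j / sqrt (\<Sum>l\<in>UNIV. (ml_coeff E c i l)\<^sup>2)"

definition col_norm :: "('v::finite \<Rightarrow> 'v \<Rightarrow> real) \<Rightarrow> 'v \<Rightarrow> real" where
  "col_norm A k = sqrt (\<Sum>l\<in>UNIV. (A l k)\<^sup>2)"

text \<open>Integral of f w.r.t. the angular measure
  H_X = \<Sum>_k ||a_k||^2 \<delta>_{a_k/||a_k||} of X = A \<times>max Z.\<close>
definition angular_integral :: "('v::finite \<Rightarrow> 'v \<Rightarrow> real) \<Rightarrow> (('v \<Rightarrow> real) \<Rightarrow> real) \<Rightarrow> real" where
  "angular_integral A f = (\<Sum>k\<in>UNIV. (col_norm A k)\<^sup>2 * f (\<lambda>l. A l k / col_norm A k))"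

text \<open>Squared scaling of the max-projection Y = \<Or>_k b_k X_k.\<close>
definition sigma2 :: "('v::finite \<Rightarrow> 'v \<Rightarrow> real) \<Rightarrow> ('v \<Rightarrow> real) \<Rightarrow> real" where
  "sigma2 A b = angular_integral A (\<lambda>\<omega>. MAX l\<in>UNIV. (b l)\<^sup>2 * (\<omega> l)\<^sup>2)"

text \<open>Weights of M_{i, s j, s Obs} = X_i \<or> s X_j \<or> \<Or>_{k\<in>Obs} s X_k.\<close>
definition wM3 :: "'v \<Rightarrow> real \<Rightarrow> 'v \<Rightarrow> 'v set \<Rightarrow> 'v \<Rightarrow> real" where
  "wM3 i s j Obs = (\<lambda>k. max (if k = i then 1 else 0) (if k = j \<or> k \<in> Obs then s else 0))"

text \<open>Weights of M_{j,Obs} = X_j \<or> \<Or>_{k\<in>Obs} X_k.\<close>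
definition wM2 :: "'v \<Rightarrow> 'v set \<Rightarrow> 'v \<Rightarrow> real" where
  "wM2 j Obs = (\<lambda>k. if k = j \<or> k \<in> Obs then 1 else 0)"

definition cond_star :: "('v::finite \<Rightarrow> 'v \<Rightarrow> real) \<Rightarrow> real \<Rightarrow> 'v set \<Rightarrow> 'v \<Rightarrow> bool" where
  "cond_star A a Obs j \<longleftrightarrow>
     (\<forall>i \<in> UNIV - (Obs \<union> {j}).
        sigma2 A (wM3 i a j Obs) - sigma2 A (wM3 i 1 j Obs) = (a\<^sup>2 - 1) * sigma2 A (wM2 j Obs))"

end

(* The excess sigma2(M_{i,aj,aO}) - sigma2(M_{i,j,O}) - (a^2 - 1) sigma2(M_{j,O}) is a sum over
   the atoms of the angular measure, i.e. over the columns k of A, of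
   |a_k|^2 (max(I, a^2 P) - max(I, P) - (a^2 - 1) P), where I = omega_ik^2 and P is the largest
   omega_lk^2 over l in {j} u O.  Each term is nonpositive and vanishes iff I <= P or P = 0.
   P > 0 only in columns of ancestors of j or of O.  If all these lie in {j} u O, column k
   contributes its dominant diagonal entry to P and every term vanishes.  An unobserved ancestor i
   of j makes the term of column i negative, as there omega_ii dominates P > 0. *)

theory Submission
  imports Defs
begin

lemma an_irrefl: "acyclic E \<Longrightarrow> j \<notin> an E j"
  unfolding an_def acyclic_def by auto

lemma an_trans: "j \<in> an E k \<Longrightarrow> k \<in> an E i \<Longrightarrow> j \<in> an E i"
  unfolding an_def by auto

lemma edge_in_an: "(k, i) \<in> E \<Longrightarrow> k \<in> an E i"
  unfolding an_def by auto

subsection \<open>Directed paths\<close>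

lemma dpath_nth_trancl:
  assumes "dpath E p j i" "s < t" "t < length p"
  shows "(p ! s, p ! t) \<in> E\<^sup>+"
  using assms(2,3)
proof (induction t)
  case 0
  then show ?case by simp
next
  case (Suc t)
  have edge: "(p ! t, p ! Suc t) \<in> E"
    using assms(1) Suc.prems unfolding dpath_def by auto
  show ?case
  proof (cases "s = t")
    case True
    then show ?thesis using edge by auto
  next
    case False
    then have "(p ! s, p ! t) \<in> E\<^sup>+" using Suc by auto
    then show ?thesis using edge by (rule trancl_into_trancl)
  qed
qed

lemma dpath_distinct:
  assumes "acyclic E" "dpath E p j i"
  shows "distinct p"
  unfolding distinct_conv_nth
proof (intro allI impI)
  fix s t assume st: "s < length p" "t < length p" "s \<noteq> t"
  show "p ! s \<noteq> p ! t"
  proof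
    assume eq: "p ! s = p ! t"
    have "(p ! min s t, p ! max s t) \<in> E\<^sup>+"
      using st by (intro dpath_nth_trancl[OF assms(2)]) auto
    then have "(p ! s, p ! s) \<in> E\<^sup>+"
      using eq by (cases "s \<le> t") (auto simp: min_def max_def)
    then show False using assms(1) unfolding acyclic_def by blast
  qed
qed

lemma finite_dpaths:
  fixes i :: "'v::finite"
  assumes "acyclic E"
  shows "finite {p. dpath E p j i}"
proof -
  have "{p. dpath E p j i} \<subseteq> {xs. set xs \<subseteq> UNIV \<and> length xs \<le> CARD('v)}"
  proof safe
    fix p assume "dpath E p j i"
    then have "length p = card (set p)"
      using dpath_distinct[OF assms] by (simp add: distinct_card)
    also have "\<dots> \<le> CARD('v)" by (rule card_mono) auto
    finally show "length p \<le> CARD('v)" .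
  qed simp
  then show ?thesis
    by (rule finite_subset) (rule finite_lists_length_le[OF finite_class.finite_UNIV])
qed

lemma dpath_edge: "(j, i) \<in> E \<Longrightarrow> dpath E [j, i] j i"
  unfolding dpath_def by auto

lemma dpath_snoc:
  assumes "dpath E p j y" "(y, z) \<in> E"
  shows "dpath E (p @ [z]) j z"
proof -
  have p: "p \<noteq> []" "hd p = j" "last p = y" "\<forall>t < length p - 1. (p ! t, p ! Suc t) \<in> E"
    using assms(1) unfolding dpath_def by auto
  have "((p @ [z]) ! t, (p @ [z]) ! Suc t) \<in> E" if t: "t < length p" for t
  proof (cases "Suc t < length p")
    case True
    then show ?thesis using p(4) by (auto simp: nth_append)
  next
    case False
    then have "t = length p - 1" using t by simp
    then have "(p @ [z]) ! t = y" "(p @ [z]) ! Suc t = z"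
      using p(1,3) t by (auto simp: nth_append last_conv_nth)
    then show ?thesis using assms(2) by simp
  qed
  then show ?thesis using p(1,2) unfolding dpath_def by auto
qed

lemma dpath_butlast:
  assumes "dpath E p j i" "2 \<le> length p"
  shows "dpath E (butlast p) j (last (butlast p))" "(last (butlast p), i) \<in> E"
    and "p = butlast p @ [i]" "butlast p \<noteq> []"
proof -
  have p: "p \<noteq> []" "hd p = j" "last p = i" "\<forall>t < length p - 1. (p ! t, p ! Suc t) \<in> E"
    using assms(1) unfolding dpath_def by auto
  show q: "butlast p \<noteq> []" using assms(2) by (cases p rule: rev_cases) auto
  show split: "p = butlast p @ [i]" using p by (metis append_butlast_last_id)
  have "(p ! (length p - 2), p ! Suc (length p - 2)) \<in> E" using p(4) assms(2) by auto
  moreover have "p ! (length p - 2) = last (butlast p)"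
    using q assms(2) by (simp add: last_conv_nth nth_butlast numeral_2_eq_2)
  moreover have "p ! Suc (length p - 2) = i"
    using p assms(2) by (simp add: last_conv_nth Suc_diff_Suc numeral_2_eq_2)
  ultimately show "(last (butlast p), i) \<in> E" by simp
  have "hd (butlast p) = j" using p(2) q split by (metis hd_append2)
  then show "dpath E (butlast p) j (last (butlast p))"
    using p(4) q unfolding dpath_def by (auto simp: nth_butlast)
qed

lemma trancl_imp_dpath:
  assumes "(j, i) \<in> E\<^sup>+"
  shows "\<exists>p. dpath E p j i \<and> 2 \<le> length p"
  using assms
proof (induction rule: trancl_induct)
  case (base i)
  then show ?case using dpath_edge by fastforce
next
  case (step y z)
  then obtain p where "dpath E p j y" "2 \<le> length p" by blast
  then show ?case using dpath_snoc[OF _ step(2)] by force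
qed

lemma path_weight_snoc:
  assumes "p \<noteq> []"
  shows "path_weight c (p @ [z]) = path_weight c p * c z (last p)"
proof -
  obtain n where n: "length p = Suc n" using assms by (cases p) auto
  have "(\<Prod>t < length (p @ [z]) - 1. c ((p @ [z]) ! Suc t) ((p @ [z]) ! t))
      = (\<Prod>t < n. c ((p @ [z]) ! Suc t) ((p @ [z]) ! t)) * c z (last p)"
    using n assms by (simp add: nth_append last_conv_nth)
  also have "(\<Prod>t < n. c ((p @ [z]) ! Suc t) ((p @ [z]) ! t))
      = (\<Prod>t < length p - 1. c (p ! Suc t) (p ! t))"
    using n by (intro prod.cong) (auto simp: nth_append)
  finally show ?thesis unfolding path_weight_def using assms by (simp add: mult.assoc)
qed

lemma path_weight_pos:
  assumes "dpath E p j i" "\<And>k i. (k, i) \<in> E \<Longrightarrow> 0 < c i k" "\<And>i. 0 < c i i"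
  shows "0 < path_weight c p"
  using assms unfolding path_weight_def dpath_def by (intro mult_pos_pos prod_pos) auto

subsection \<open>Max-linear coefficients of a weighted DAG\<close>

locale weighted_dag =
  fixes E :: "('v::finite \<times> 'v) set" and c :: "'v \<Rightarrow> 'v \<Rightarrow> real"
  assumes acyclic: "acyclic E"
    and edge_weight_pos: "\<And>k i. (k, i) \<in> E \<Longrightarrow> 0 < c i k"
    and diag_weight_pos: "\<And>i. 0 < c i i"
begin

lemma path_weights_finite: "finite {path_weight c p | p. dpath E p j i \<and> 2 \<le> length p}"
proof -
  have "finite {p. dpath E p j i \<and> 2 \<le> length p}"
    by (rule finite_subset[OF _ finite_dpaths[OF acyclic, of j i]]) auto
  then show ?thesis by (simp add: setcompr_eq_image)
qed

lemma ml_coeff_eq_Max: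
  assumes "j \<in> an E i"
  shows "ml_coeff E c i j = Max {path_weight c p | p. dpath E p j i \<and> 2 \<le> length p}"
    and "{path_weight c p | p. dpath E p j i \<and> 2 \<le> length p} \<noteq> {}"
proof -
  show ne: "{path_weight c p | p. dpath E p j i \<and> 2 \<le> length p} \<noteq> {}"
    using trancl_imp_dpath[of j i E] assms unfolding an_def by auto
  have "i \<noteq> j" using assms an_irrefl[OF acyclic] by auto
  then show "ml_coeff E c i j = Max {path_weight c p | p. dpath E p j i \<and> 2 \<le> length p}"
    using assms cSup_eq_Max[OF path_weights_finite ne] unfolding ml_coeff_def by simp
qed

lemma ml_coeff_attained:
  assumes "j \<in> an E i"
  obtains p where "dpath E p j i" "2 \<le> length p" "ml_coeff E c i j = path_weight c p"
  using Max_in[OF path_weights_finite ml_coeff_eq_Max(2)[OF assms]] ml_coeff_eq_Max(1)[OF assms]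
  by auto

lemma path_weight_le_ml_coeff:
  assumes "dpath E p j i" "2 \<le> length p"
  shows "path_weight c p \<le> ml_coeff E c i j"
proof -
  have "(p ! 0, p ! (length p - 1)) \<in> E\<^sup>+"
    using assms by (intro dpath_nth_trancl[OF assms(1)]) auto
  then have "j \<in> an E i"
    using assms unfolding dpath_def an_def by (auto simp: hd_conv_nth last_conv_nth)
  then show ?thesis
    using assms ml_coeff_eq_Max(1) by (auto intro: Max_ge[OF path_weights_finite])
qed

lemma ml_coeff_diag: "ml_coeff E c i i = c i i"
  unfolding ml_coeff_def by simp

lemma ml_coeff_eq_0: "k \<noteq> i \<Longrightarrow> k \<notin> an E i \<Longrightarrow> ml_coeff E c i k = 0"
  unfolding ml_coeff_def by simp

lemma ml_coeff_pos_iff: "0 < ml_coeff E c i k \<longleftrightarrow> k = i \<or> k \<in> an E i"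
proof -
  have "0 < ml_coeff E c i k" if an: "k \<in> an E i"
  proof -
    obtain p where "dpath E p k i" "ml_coeff E c i k = path_weight c p"
      using ml_coeff_attained[OF an] by metis
    then show ?thesis using path_weight_pos edge_weight_pos diag_weight_pos by metis
  qed
  then show ?thesis using ml_coeff_eq_0 ml_coeff_diag diag_weight_pos by force
qed

lemma ml_coeff_nonneg: "0 \<le> ml_coeff E c i k"
  using ml_coeff_pos_iff[of i k] ml_coeff_eq_0[of k i] by fastforce

lemma ml_coeff_attained_An:
  assumes "k = l \<or> k \<in> an E l"
  obtains q where "dpath E q k l" "ml_coeff E c l k = path_weight c q"
proof (cases "k = l")
  case True
  have "dpath E [l] l l" "path_weight c [l] = c l l"
    unfolding dpath_def path_weight_def by simp_all
  then show ?thesis using that True ml_coeff_diag by simp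
next
  case False
  then show ?thesis using that ml_coeff_attained assms by blast
qed

lemma ml_coeff_edge_le:
  assumes edge: "(l, i) \<in> E"
  shows "c i l * ml_coeff E c l k \<le> ml_coeff E c i k"
proof (cases "k = l \<or> k \<in> an E l")
  case True
  then obtain q where q: "dpath E q k l" "ml_coeff E c l k = path_weight c q"
    by (rule ml_coeff_attained_An)
  have q_ne: "q \<noteq> []" "last q = l" using q(1) unfolding dpath_def by auto
  have "path_weight c (q @ [i]) \<le> ml_coeff E c i k"
    using q_ne by (intro path_weight_le_ml_coeff dpath_snoc[OF q(1) edge]) (auto simp: Suc_le_eq)
  moreover have "path_weight c (q @ [i]) = path_weight c q * c i l"
    using path_weight_snoc[OF q_ne(1)] q_ne(2) by simp
  ultimately show ?thesis using q(2) by (simp add: mult.commute)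
next
  case False
  then show ?thesis using ml_coeff_eq_0 ml_coeff_nonneg by simp
qed

lemma ml_coeff_via_parent:
  assumes "j \<in> an E i"
  obtains l where "(l, i) \<in> E" "l = j \<or> j \<in> an E l"
    and "ml_coeff E c i j \<le> c i l * ml_coeff E c l j"
proof -
  obtain p where p: "dpath E p j i" "2 \<le> length p" "ml_coeff E c i j = path_weight c p"
    using ml_coeff_attained[OF assms] by metis
  define q where "q = butlast p"
  define l where "l = last q"
  have q: "dpath E q j l" "(l, i) \<in> E" "p = q @ [i]" "q \<noteq> []"
    using dpath_butlast[OF p(1,2)] unfolding q_def l_def by auto
  have "(l = j \<or> j \<in> an E l) \<and> path_weight c q \<le> ml_coeff E c l j"
  proof (cases "2 \<le> length q")
    case True
    have "(q ! 0, q ! (length q - 1)) \<in> E\<^sup>+"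
      using True by (intro dpath_nth_trancl[OF q(1)]) auto
    then have "j \<in> an E l"
      using q(1,4) unfolding dpath_def an_def by (auto simp: hd_conv_nth last_conv_nth)
    then show ?thesis using path_weight_le_ml_coeff[OF q(1) True] by blast
  next
    case False
    then have "length q = 1" using q(4) by (cases q) (auto simp: Suc_le_eq)
    then obtain x where "q = [x]" by (auto simp: length_Suc_conv)
    then have "q = [j]" "l = j" using q(1) unfolding dpath_def l_def by simp_all
    then show ?thesis by (simp add: path_weight_def ml_coeff_diag)
  qed
  moreover have "ml_coeff E c i j = path_weight c q * c i l"
    using p(3) q(3,4) path_weight_snoc[of q c i] unfolding l_def by simp
  ultimately show ?thesis
    using that q(2) edge_weight_pos[OF q(2)] by (metis mult.commute mult_left_mono less_imp_le)
qed

definition row_norm :: "'v \<Rightarrow> real" where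
  "row_norm i = sqrt (\<Sum>l\<in>UNIV. (ml_coeff E c i l)\<^sup>2)"

lemma std_coeff_eq: "std_coeff E c i k = ml_coeff E c i k / row_norm i"
  unfolding std_coeff_def row_norm_def ..

lemma row_norm_pos: "0 < row_norm i"
proof -
  have "(ml_coeff E c i i)\<^sup>2 \<le> (\<Sum>l\<in>UNIV. (ml_coeff E c i l)\<^sup>2)"
    by (rule member_le_sum) auto
  moreover have "0 < (ml_coeff E c i i)\<^sup>2"
    using diag_weight_pos[of i] by (simp add: ml_coeff_diag)
  ultimately have "0 < (\<Sum>l\<in>UNIV. (ml_coeff E c i l)\<^sup>2)" by linarith
  then show ?thesis unfolding row_norm_def by simp
qed

text \<open>The inequality is strict because row \<open>i\<close> has the entry \<open>c i i\<close> in column \<open>i\<close>,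
  where row \<open>l\<close> vanishes.\<close>

lemma row_norm_edge_less:
  assumes edge: "(l, i) \<in> E"
  shows "c i l * row_norm l < row_norm i"
proof -
  have c_pos: "0 < c i l" by (rule edge_weight_pos[OF edge])
  have "i \<notin> an E l"
    using an_trans[OF _ edge_in_an[OF edge]] an_irrefl[OF acyclic] by blast
  moreover have "l \<noteq> i" using edge acyclic unfolding acyclic_def by blast
  ultimately have vanish: "ml_coeff E c l i = 0" by (simp add: ml_coeff_eq_0)
  have "(\<Sum>k\<in>UNIV. (c i l * ml_coeff E c l k)\<^sup>2) < (\<Sum>k\<in>UNIV. (ml_coeff E c i k)\<^sup>2)"
  proof (rule sum_strict_mono_ex1)
    show "\<forall>k\<in>UNIV. (c i l * ml_coeff E c l k)\<^sup>2 \<le> (ml_coeff E c i k)\<^sup>2"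
      using c_pos ml_coeff_nonneg ml_coeff_edge_le[OF edge] by (simp add: power_mono)
    show "\<exists>k\<in>UNIV. (c i l * ml_coeff E c l k)\<^sup>2 < (ml_coeff E c i k)\<^sup>2"
      using vanish diag_weight_pos[of i] by (intro bexI[of _ i]) (simp_all add: ml_coeff_diag)
  qed simp
  moreover have "sqrt (\<Sum>k\<in>UNIV. (c i l * ml_coeff E c l k)\<^sup>2) = c i l * row_norm l"
    unfolding row_norm_def using c_pos
    by (simp add: power_mult_distrib sum_distrib_left[symmetric] real_sqrt_mult)
  ultimately show ?thesis unfolding row_norm_def by (metis real_sqrt_less_mono)
qed

lemma ml_coeff_ratio_less:
  assumes "j \<in> an E i"
  shows "ml_coeff E c i j / row_norm i < c j j / row_norm j"
  using assms
proof (induction i rule: wf_induct_rule[OF finite_acyclic_wf[OF finite acyclic]])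
  case (1 i)
  obtain l where l: "(l, i) \<in> E" "l = j \<or> j \<in> an E l"
    and via: "ml_coeff E c i j \<le> c i l * ml_coeff E c l j"
    using ml_coeff_via_parent[OF "1.prems"] by metis
  have c_pos: "0 < c i l" by (rule edge_weight_pos[OF l(1)])
  have "ml_coeff E c i j / row_norm i \<le> c i l * ml_coeff E c l j / row_norm i"
    using via row_norm_pos[of i] by (intro divide_right_mono) simp_all
  also have "\<dots> < c i l * ml_coeff E c l j / (c i l * row_norm l)"
    using row_norm_edge_less[OF l(1)] l(2) c_pos row_norm_pos ml_coeff_pos_iff[of l j]
    by (intro divide_strict_left_mono) auto
  also have "\<dots> = ml_coeff E c l j / row_norm l" using c_pos by simp
  also have "\<dots> \<le> c j j / row_norm j"
    using l(2) "1.IH"[OF l(1)] by (auto simp: ml_coeff_diag)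
  finally show ?case .
qed

lemma std_coeff_nonneg: "0 \<le> std_coeff E c i k"
  unfolding std_coeff_eq using ml_coeff_nonneg row_norm_pos by (simp add: less_imp_le)

lemma std_coeff_pos_iff: "0 < std_coeff E c i k \<longleftrightarrow> k = i \<or> k \<in> an E i"
  unfolding std_coeff_eq using ml_coeff_pos_iff row_norm_pos[of i] by (simp add: zero_less_divide_iff)

lemma std_coeff_less_diag:
  assumes "l \<noteq> k"
  shows "std_coeff E c l k < std_coeff E c k k"
proof (cases "k \<in> an E l")
  case True
  then show ?thesis using ml_coeff_ratio_less by (simp add: std_coeff_eq ml_coeff_diag)
next
  case False
  then show ?thesis using assms std_coeff_pos_iff[of k k] by (simp add: std_coeff_eq ml_coeff_eq_0)
qed

end

subsection \<open>Scalings of max-projections\<close>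

definition maxproj_atom :: "('v::finite \<Rightarrow> 'v \<Rightarrow> real) \<Rightarrow> ('v \<Rightarrow> real) \<Rightarrow> 'v \<Rightarrow> real" where
  "maxproj_atom A b k = (MAX l\<in>UNIV. (b l)\<^sup>2 * (A l k / col_norm A k)\<^sup>2)"

lemma sigma2_eq_sum: "sigma2 A b = (\<Sum>k\<in>UNIV. (col_norm A k)\<^sup>2 * maxproj_atom A b k)"
  unfolding sigma2_def angular_integral_def maxproj_atom_def ..

lemma maxproj_atom_ge: "(b l)\<^sup>2 * (A l k / col_norm A k)\<^sup>2 \<le> maxproj_atom A b k"
  unfolding maxproj_atom_def by simp

lemma maxproj_atom_attained:
  obtains l where "maxproj_atom A b k = (b l)\<^sup>2 * (A l k / col_norm A k)\<^sup>2"
proof -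
  have "maxproj_atom A b k \<in> range (\<lambda>l. (b l)\<^sup>2 * (A l k / col_norm A k)\<^sup>2)"
    unfolding maxproj_atom_def by (rule Max_in) auto
  then show ?thesis using that by blast
qed

lemma maxproj_atom_nonneg: "0 \<le> maxproj_atom A b k"
  by (rule maxproj_atom_attained[of A b k]) simp

lemma wM3_sq:
  assumes "i \<noteq> j" "i \<notin> Obs" "0 \<le> s"
  shows "(wM3 i s j Obs l)\<^sup>2 = (if l = i then 1 else s\<^sup>2 * (wM2 j Obs l)\<^sup>2)"
  using assms by (auto simp: wM3_def wM2_def)

lemma maxproj_atom_wM3:
  assumes "i \<noteq> j" "i \<notin> Obs" "0 \<le> s"
  shows "maxproj_atom A (wM3 i s j Obs) k
    = max ((A i k / col_norm A k)\<^sup>2) (s\<^sup>2 * maxproj_atom A (wM2 j Obs) k)"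
proof (rule antisym)
  have "(wM3 i s j Obs l)\<^sup>2 * (A l k / col_norm A k)\<^sup>2
      \<le> max ((A i k / col_norm A k)\<^sup>2) (s\<^sup>2 * maxproj_atom A (wM2 j Obs) k)" for l
  proof (cases "l = i")
    case False
    then have "(wM3 i s j Obs l)\<^sup>2 * (A l k / col_norm A k)\<^sup>2
        = s\<^sup>2 * ((wM2 j Obs l)\<^sup>2 * (A l k / col_norm A k)\<^sup>2)"
      by (simp add: wM3_sq[OF assms])
    also have "\<dots> \<le> s\<^sup>2 * maxproj_atom A (wM2 j Obs) k"
      by (intro mult_left_mono maxproj_atom_ge) simp
    finally show ?thesis by simp
  qed (simp add: wM3_sq[OF assms])
  then show "maxproj_atom A (wM3 i s j Obs) k
      \<le> max ((A i k / col_norm A k)\<^sup>2) (s\<^sup>2 * maxproj_atom A (wM2 j Obs) k)"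
    unfolding maxproj_atom_def[of A "wM3 i s j Obs"] by (intro Max.boundedI) auto
  obtain l where l: "maxproj_atom A (wM2 j Obs) k = (wM2 j Obs l)\<^sup>2 * (A l k / col_norm A k)\<^sup>2"
    by (rule maxproj_atom_attained)
  have "s\<^sup>2 * maxproj_atom A (wM2 j Obs) k \<le> maxproj_atom A (wM3 i s j Obs) k"
  proof (cases "l = i")
    case True
    then show ?thesis
      using l assms maxproj_atom_nonneg[of A "wM3 i s j Obs" k] by (simp add: wM2_def)
  next
    case False
    then show ?thesis
      using l maxproj_atom_ge[of "wM3 i s j Obs" l A k] by (simp add: wM3_sq[OF assms] mult.assoc)
  qed
  moreover have "(A i k / col_norm A k)\<^sup>2 \<le> maxproj_atom A (wM3 i s j Obs) k"
    using maxproj_atom_ge[of "wM3 i s j Obs" i A k] by (simp add: wM3_sq[OF assms])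
  ultimately show "max ((A i k / col_norm A k)\<^sup>2) (s\<^sup>2 * maxproj_atom A (wM2 j Obs) k)
      \<le> maxproj_atom A (wM3 i s j Obs) k" by simp
qed

definition max_scale_defect :: "real \<Rightarrow> real \<Rightarrow> real \<Rightarrow> real" where
  "max_scale_defect b I P = max I (b * P) - max I P - (b - 1) * P"

lemma max_scale_defect_nonpos:
  assumes "0 \<le> P" "1 \<le> b"
  shows "max_scale_defect b I P \<le> 0"
proof -
  have "P \<le> b * P" using assms by (simp add: mult_le_cancel_right1)
  then show ?thesis by (auto simp: max_scale_defect_def max_def algebra_simps)
qed

lemma max_scale_defect_eq_0_iff:
  assumes "0 \<le> P" "1 < b"
  shows "max_scale_defect b I P = 0 \<longleftrightarrow> I \<le> P \<or> P = 0"
proof (cases "P = 0")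
  case False
  then have "P < b * P" using assms by simp
  then show ?thesis by (auto simp: max_scale_defect_def max_def algebra_simps)
qed (simp add: max_scale_defect_def)

lemma sigma2_gap_eq_sum:
  assumes "i \<noteq> j" "i \<notin> Obs" "0 \<le> a"
  shows "sigma2 A (wM3 i a j Obs) - sigma2 A (wM3 i 1 j Obs) - (a\<^sup>2 - 1) * sigma2 A (wM2 j Obs)
    = (\<Sum>k\<in>UNIV. (col_norm A k)\<^sup>2 *
        max_scale_defect (a\<^sup>2) ((A i k / col_norm A k)\<^sup>2) (maxproj_atom A (wM2 j Obs) k))"
proof -
  let ?n = "\<lambda>k. (col_norm A k)\<^sup>2" and ?I = "\<lambda>k. (A i k / col_norm A k)\<^sup>2"
    and ?P = "maxproj_atom A (wM2 j Obs)"
  have "sigma2 A (wM3 i a j Obs) - sigma2 A (wM3 i 1 j Obs) - (a\<^sup>2 - 1) * sigma2 A (wM2 j Obs)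
      = (\<Sum>k\<in>UNIV. ?n k * max (?I k) (a\<^sup>2 * ?P k)) - (\<Sum>k\<in>UNIV. ?n k * max (?I k) (?P k))
        - (a\<^sup>2 - 1) * (\<Sum>k\<in>UNIV. ?n k * ?P k)"
    using maxproj_atom_wM3[OF assms] maxproj_atom_wM3[OF assms(1,2), of 1]
    by (simp add: sigma2_eq_sum)
  also have "\<dots> = (\<Sum>k\<in>UNIV. ?n k * max (?I k) (a\<^sup>2 * ?P k) - ?n k * max (?I k) (?P k)
        - (a\<^sup>2 - 1) * (?n k * ?P k))"
    by (simp add: sum_subtractf sum_distrib_left)
  also have "\<dots> = (\<Sum>k\<in>UNIV. ?n k * max_scale_defect (a\<^sup>2) (?I k) (?P k))"
    by (rule sum.cong) (simp_all add: max_scale_defect_def algebra_simps)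
  finally show ?thesis .
qed

lemma sigma2_gap_le:
  assumes "i \<noteq> j" "i \<notin> Obs" "1 \<le> a"
  shows "sigma2 A (wM3 i a j Obs) - sigma2 A (wM3 i 1 j Obs) \<le> (a\<^sup>2 - 1) * sigma2 A (wM2 j Obs)"
proof -
  have a0: "0 \<le> a" using assms(3) by simp
  have "1 \<le> a\<^sup>2" using assms(3) by (simp add: one_le_power)
  then have "(\<Sum>k\<in>UNIV. (col_norm A k)\<^sup>2 *
        max_scale_defect (a\<^sup>2) ((A i k / col_norm A k)\<^sup>2) (maxproj_atom A (wM2 j Obs) k)) \<le> 0"
    by (intro sum_nonpos mult_nonneg_nonpos max_scale_defect_nonpos maxproj_atom_nonneg) simp_all
  then show ?thesis using sigma2_gap_eq_sum[OF assms(1,2) a0, of A] by linarith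
qed

lemma sigma2_gap_eq_iff:
  assumes "i \<noteq> j" "i \<notin> Obs" "1 < a" and col_norm_pos: "\<And>k. 0 < col_norm A k"
  shows "sigma2 A (wM3 i a j Obs) - sigma2 A (wM3 i 1 j Obs) = (a\<^sup>2 - 1) * sigma2 A (wM2 j Obs)
    \<longleftrightarrow> (\<forall>k. (A i k / col_norm A k)\<^sup>2 \<le> maxproj_atom A (wM2 j Obs) k
             \<or> maxproj_atom A (wM2 j Obs) k = 0)"
proof -
  let ?d = "\<lambda>k. (col_norm A k)\<^sup>2 *
        max_scale_defect (a\<^sup>2) ((A i k / col_norm A k)\<^sup>2) (maxproj_atom A (wM2 j Obs) k)"
  have b: "1 < a\<^sup>2" using assms(3) by (simp add: one_less_power)
  have "?d k \<le> 0" for k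
    using b by (intro mult_nonneg_nonpos max_scale_defect_nonpos maxproj_atom_nonneg) simp_all
  then have "(\<Sum>k\<in>UNIV. ?d k) = 0 \<longleftrightarrow> (\<forall>k. ?d k = 0)"
    using sum_nonneg_eq_0_iff[of UNIV "\<lambda>k. - ?d k"] by (simp add: sum_negf le_minus_iff)
  also have "\<dots> \<longleftrightarrow> (\<forall>k. (A i k / col_norm A k)\<^sup>2 \<le> maxproj_atom A (wM2 j Obs) k
             \<or> maxproj_atom A (wM2 j Obs) k = 0)"
    using b col_norm_pos[THEN less_imp_neq, THEN not_sym]
    by (simp add: max_scale_defect_eq_0_iff maxproj_atom_nonneg)
  finally have "(\<Sum>k\<in>UNIV. ?d k) = 0 \<longleftrightarrow> (\<forall>k. (A i k / col_norm A k)\<^sup>2 \<le> maxproj_atom A (wM2 j Obs) k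
             \<or> maxproj_atom A (wM2 j Obs) k = 0)" .
  moreover have "0 \<le> a" using assms(3) by simp
  ultimately show ?thesis using sigma2_gap_eq_sum[OF assms(1,2), of a A] by argo
qed

subsection \<open>Coefficient matrices of recursive max-linear models\<close>

locale max_linear_coeffs =
  fixes E :: "('v::finite \<times> 'v) set" and A :: "'v \<Rightarrow> 'v \<Rightarrow> real"
  assumes acyclic: "acyclic E"
    and coeff_nonneg: "\<And>l k. 0 \<le> A l k"
    and coeff_pos_iff: "\<And>l k. 0 < A l k \<longleftrightarrow> k = l \<or> k \<in> an E l"
    and coeff_less_diag: "\<And>l k. l \<noteq> k \<Longrightarrow> A l k < A k k"
begin

lemma col_norm_pos: "0 < col_norm A k"
proof -
  have "(A k k)\<^sup>2 \<le> (\<Sum>l\<in>UNIV. (A l k)\<^sup>2)" by (rule member_le_sum) auto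
  moreover have "0 < (A k k)\<^sup>2" using coeff_pos_iff[of k k] by simp
  ultimately have "0 < (\<Sum>l\<in>UNIV. (A l k)\<^sup>2)" by linarith
  then show ?thesis unfolding col_norm_def by simp
qed

lemma angle_sq_less_diag:
  assumes "l \<noteq> k"
  shows "(A l k / col_norm A k)\<^sup>2 < (A k k / col_norm A k)\<^sup>2"
  using assms coeff_nonneg[of l k] coeff_less_diag col_norm_pos[of k]
  by (intro power_strict_mono divide_strict_right_mono) simp_all

lemma maxproj_atom_eq_0:
  assumes "k \<notin> An E ({j} \<union> Obs)"
  shows "maxproj_atom A (wM2 j Obs) k = 0"
proof -
  obtain l where l: "maxproj_atom A (wM2 j Obs) k = (wM2 j Obs l)\<^sup>2 * (A l k / col_norm A k)\<^sup>2"
    by (rule maxproj_atom_attained)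
  show ?thesis
  proof (cases "l = j \<or> l \<in> Obs")
    case True
    then have "k \<noteq> l \<and> k \<notin> an E l" using assms unfolding An_def by auto
    then have "\<not> 0 < A l k" using coeff_pos_iff by simp
    then have "A l k = 0" using coeff_nonneg[of l k] by simp
    then show ?thesis using l by simp
  qed (use l in \<open>simp add: wM2_def\<close>)
qed

lemma maxproj_atom_ge_diag:
  assumes "k = j \<or> k \<in> Obs"
  shows "(A k k / col_norm A k)\<^sup>2 \<le> maxproj_atom A (wM2 j Obs) k"
  using maxproj_atom_ge[of "wM2 j Obs" k A k] assms by (simp add: wM2_def)

lemma sigma2_gap_eq_if_no_unobserved_ancestor:
  assumes "An E Obs \<inter> (UNIV - Obs) = {}" "an E j \<inter> (UNIV - Obs) = {}"
    and "i \<noteq> j" "i \<notin> Obs" "1 < a"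
  shows "sigma2 A (wM3 i a j Obs) - sigma2 A (wM3 i 1 j Obs) = (a\<^sup>2 - 1) * sigma2 A (wM2 j Obs)"
  unfolding sigma2_gap_eq_iff[OF assms(3-5) col_norm_pos]
proof
  fix k
  show "(A i k / col_norm A k)\<^sup>2 \<le> maxproj_atom A (wM2 j Obs) k \<or> maxproj_atom A (wM2 j Obs) k = 0"
  proof (cases "k = j \<or> k \<in> Obs")
    case True
    then have "i \<noteq> k" using assms(3,4) by blast
    then show ?thesis using angle_sq_less_diag maxproj_atom_ge_diag[OF True] by fastforce
  next
    case False
    then have "k \<notin> An E ({j} \<union> Obs)"
      using assms(1,2) unfolding An_def by auto
    then show ?thesis by (simp add: maxproj_atom_eq_0)
  qed
qed

lemma sigma2_gap_less_if_ancestor: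
  assumes "i \<in> an E j" "i \<notin> Obs" "1 < a"
  shows "sigma2 A (wM3 i a j Obs) - sigma2 A (wM3 i 1 j Obs) < (a\<^sup>2 - 1) * sigma2 A (wM2 j Obs)"
proof -
  have ij: "i \<noteq> j" using assms(1) an_irrefl[OF acyclic] by blast
  have "0 < (A j i / col_norm A i)\<^sup>2" using assms(1) coeff_pos_iff[of j i] col_norm_pos[of i] by simp
  also have "\<dots> \<le> maxproj_atom A (wM2 j Obs) i"
    using maxproj_atom_ge[of "wM2 j Obs" j A i] by (simp add: wM2_def)
  finally have pos: "0 < maxproj_atom A (wM2 j Obs) i" .
  obtain l where l: "maxproj_atom A (wM2 j Obs) i = (wM2 j Obs l)\<^sup>2 * (A l i / col_norm A i)\<^sup>2"
    by (rule maxproj_atom_attained)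
  have l_obs: "l = j \<or> l \<in> Obs"
    using l pos by (auto simp: wM2_def split: if_splits)
  then have "maxproj_atom A (wM2 j Obs) i = (A l i / col_norm A i)\<^sup>2"
    using l by (simp add: wM2_def)
  also have "\<dots> < (A i i / col_norm A i)\<^sup>2"
    using l_obs ij assms(2) by (intro angle_sq_less_diag) blast
  finally have "maxproj_atom A (wM2 j Obs) i < (A i i / col_norm A i)\<^sup>2" .
  then have "\<not> ((A i i / col_norm A i)\<^sup>2 \<le> maxproj_atom A (wM2 j Obs) i
      \<or> maxproj_atom A (wM2 j Obs) i = 0)" using pos by simp
  then have "sigma2 A (wM3 i a j Obs) - sigma2 A (wM3 i 1 j Obs) \<noteq> (a\<^sup>2 - 1) * sigma2 A (wM2 j Obs)"
    unfolding sigma2_gap_eq_iff[OF ij assms(2,3) col_norm_pos] by blast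
  moreover have "sigma2 A (wM3 i a j Obs) - sigma2 A (wM3 i 1 j Obs) \<le> (a\<^sup>2 - 1) * sigma2 A (wM2 j Obs)"
    using assms(3) by (intro sigma2_gap_le[OF ij assms(2)]) simp
  ultimately show ?thesis by linarith
qed

lemma cond_star_iff_no_unobserved_ancestor:
  assumes "An E Obs \<inter> (UNIV - Obs) = {}" "1 < a"
  shows "an E j \<inter> (UNIV - Obs) = {} \<longleftrightarrow> cond_star A a Obs j"
proof
  assume "an E j \<inter> (UNIV - Obs) = {}"
  then show "cond_star A a Obs j"
    unfolding cond_star_def using sigma2_gap_eq_if_no_unobserved_ancestor[OF assms(1)] assms(2) by blast
next
  assume star: "cond_star A a Obs j"
  show "an E j \<inter> (UNIV - Obs) = {}"
  proof (rule ccontr)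
    assume "an E j \<inter> (UNIV - Obs) \<noteq> {}"
    then obtain i where i: "i \<in> an E j" "i \<notin> Obs" by blast
    then have "i \<noteq> j" using an_irrefl[OF acyclic] by blast
    then show False
      using star i sigma2_gap_less_if_ancestor[OF i assms(2)] unfolding cond_star_def by force
  qed
qed

end

sublocale weighted_dag \<subseteq> max_linear_coeffs E "std_coeff E c"
  using acyclic std_coeff_nonneg std_coeff_pos_iff std_coeff_less_diag by unfold_locales

theorem theorem4p2:
  fixes E :: "('v::finite \<times> 'v) set" and c :: "'v \<Rightarrow> 'v \<Rightarrow> real"
    and a :: real and Obs :: "'v set"
  assumes dag: "acyclic E"
    and edge_pos: "\<And>k i. (k, i) \<in> E \<Longrightarrow> c i k > 0"
    and diag_pos: "\<And>i. c i i > 0"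
    and a_gt: "a > 1"
    and O_closed: "An E Obs \<inter> (UNIV - Obs) = {}"
  defines "A \<equiv> std_coeff E c"
  shows "(\<forall>j \<in> UNIV - Obs. an E j \<inter> (UNIV - Obs) = {} \<longleftrightarrow> cond_star A a Obs j)
    \<and> (\<forall>j \<in> UNIV - Obs. an E j \<inter> (UNIV - Obs) \<noteq> {} \<longrightarrow>
          (\<forall>i \<in> UNIV - (Obs \<union> {j}).
             sigma2 A (wM3 i a j Obs) - sigma2 A (wM3 i 1 j Obs) \<le> (a\<^sup>2 - 1) * sigma2 A (wM2 j Obs))
        \<and> (\<forall>i \<in> (UNIV - Obs) \<inter> an E j.
             sigma2 A (wM3 i a j Obs) - sigma2 A (wM3 i 1 j Obs) < (a\<^sup>2 - 1) * sigma2 A (wM2 j Obs)))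
    \<and> (\<forall>j1 \<in> UNIV - Obs. \<forall>j2 \<in> UNIV - Obs. j1 \<noteq> j2 \<and> cond_star A a Obs j1 \<and> cond_star A a Obs j2
          \<longrightarrow> j1 \<notin> an E j2 \<and> j2 \<notin> an E j1)"
proof -
  interpret weighted_dag E c
    using dag edge_pos diag_pos by unfold_locales
  have star_iff: "an E j \<inter> (UNIV - Obs) = {} \<longleftrightarrow> cond_star A a Obs j" for j
    unfolding A_def by (rule cond_star_iff_no_unobserved_ancestor[OF O_closed a_gt])
  have gap_le: "sigma2 A (wM3 i a j Obs) - sigma2 A (wM3 i 1 j Obs) \<le> (a\<^sup>2 - 1) * sigma2 A (wM2 j Obs)"
    if "i \<noteq> j" "i \<notin> Obs" for i j
    using that a_gt by (intro sigma2_gap_le) simp_all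
  have gap_less: "sigma2 A (wM3 i a j Obs) - sigma2 A (wM3 i 1 j Obs) < (a\<^sup>2 - 1) * sigma2 A (wM2 j Obs)"
    if "i \<in> an E j" "i \<notin> Obs" for i j
    unfolding A_def by (rule sigma2_gap_less_if_ancestor[OF that a_gt])
  show ?thesis
  proof (intro conjI ballI impI)
    fix j
    show "an E j \<inter> (UNIV - Obs) = {} \<longleftrightarrow> cond_star A a Obs j" by (rule star_iff)
  next
    fix j i assume "i \<in> UNIV - (Obs \<union> {j})"
    then show "sigma2 A (wM3 i a j Obs) - sigma2 A (wM3 i 1 j Obs) \<le> (a\<^sup>2 - 1) * sigma2 A (wM2 j Obs)"
      by (intro gap_le) auto
  next
    fix j i assume "i \<in> (UNIV - Obs) \<inter> an E j"
    then show "sigma2 A (wM3 i a j Obs) - sigma2 A (wM3 i 1 j Obs) < (a\<^sup>2 - 1) * sigma2 A (wM2 j Obs)"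
      by (intro gap_less) auto
  next
    fix j1 j2 assume j: "j1 \<in> UNIV - Obs" "j2 \<in> UNIV - Obs"
      and star: "j1 \<noteq> j2 \<and> cond_star A a Obs j1 \<and> cond_star A a Obs j2"
    have "an E j1 \<inter> (UNIV - Obs) = {}" "an E j2 \<inter> (UNIV - Obs) = {}"
      using star star_iff by simp_all
    then show "j1 \<notin> an E j2" "j2 \<notin> an E j1" using j by blast+
  qed
qed

end
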